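(* Let $G$ be a connected undirected graph with positive edge weights, weighted adjacency matrix $\mathbf{A}$, degree matrix $\mathbf{D}$ (degrees $d_u$) and Laplacian $\mathbf{L}=\mathbf{D}-\mathbf{A}$, and let $\pi=\frac{\mathbf{D}\mathbf{1}}{\mathbf{1}^\top\mathbf{D}\mathbf{1}}$. For each vertex $u$ define $\sigma_u=\frac12\sum_{t=0}^\infty\left(\left(\frac12\mathbf{I}+\frac12\mathbf{A}\mathbf{D}^{-1}\right)^t\mathbf{1_u}-\pi\right)$. Let $\varepsilon>0$ and suppose vectors $\widetilde{\sigma}_u$ satisfy $\|\widetilde{\sigma}_u-\sigma_u\|_\infty\le\varepsilon/4$ for all $u$. Then for every edge $(u,v)$ of $G$, the quantity $$\frac{1}{d_u}(\widetilde{\sigma}_u)_u-\frac{1}{d_v}(\widetilde{\sigma}_u)_v+\frac{1}{d_v}(\widetilde{\sigma}_v)_v-\frac{1}{d_u}(\widetilde{\sigma}_v)_u$$ is a $(1+\varepsilon)$-approximation to the effective resistance $R(u,v)$.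
   Context: $R(u,v)=(\mathbf{1_u}-\mathbf{1_v})^\top\mathbf{L}^+(\mathbf{1_u}-\mathbf{1_v})$ with $\mathbf{L}^+$ the pseudoinverse. A $(1+\varepsilon)$-approximation $\widetilde R$ of $R$ satisfies $(1-\varepsilon)R\le\widetilde R\le(1+\varepsilon)R$. *)

theory Defs
  imports "HOL-Analysis.Analysis"
begin

definition pinv :: "real^'n^'m \<Rightarrow> real^'m^'n" where
  "pinv M = (THE X. M ** X ** M = M \<and> X ** M ** X = X \<and>
      transpose (M ** X) = M ** X \<and> transpose (X ** M) = X ** M)"

text \<open>Weighted graph on the finite vertex type 'n given by a weight function w;
  (u,v) is an edge iff w u v > 0.\<close>
definition adj_mat :: "('n::finite \<Rightarrow> 'n \<Rightarrow> real) \<Rightarrow> real^'n^'n" where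
  "adj_mat w = (\<chi> u v. w u v)"

definition deg :: "('n::finite \<Rightarrow> 'n \<Rightarrow> real) \<Rightarrow> 'n \<Rightarrow> real" where
  "deg w u = (\<Sum>v\<in>UNIV. w u v)"

definition deg_mat :: "('n::finite \<Rightarrow> 'n \<Rightarrow> real) \<Rightarrow> real^'n^'n" where
  "deg_mat w = (\<chi> u v. if u = v then deg w u else 0)"

definition lap :: "('n::finite \<Rightarrow> 'n \<Rightarrow> real) \<Rightarrow> real^'n^'n" where
  "lap w = deg_mat w - adj_mat w"

definition connected_graph :: "('n \<Rightarrow> 'n \<Rightarrow> real) \<Rightarrow> bool" where
  "connected_graph w \<longleftrightarrow> (\<forall>u v. (u, v) \<in> {(x, y). w x y > 0}\<^sup>*)"

definition eff_res :: "('n::finite \<Rightarrow> 'n \<Rightarrow> real) \<Rightarrow> 'n \<Rightarrow> 'n \<Rightarrow> real" where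
  "eff_res w u v = (axis u 1 - axis v 1) \<bullet> (pinv (lap w) *v (axis u 1 - axis v 1))"

definition stat_dist :: "('n::finite \<Rightarrow> 'n \<Rightarrow> real) \<Rightarrow> real^'n" where
  "stat_dist w = (1 / (1 \<bullet> (deg_mat w *v 1))) *\<^sub>R (deg_mat w *v 1)"

definition lazy_walk :: "('n::finite \<Rightarrow> 'n \<Rightarrow> real) \<Rightarrow> real^'n^'n" where
  "lazy_walk w = (1/2) *\<^sub>R mat 1 + (1/2) *\<^sub>R (adj_mat w ** matrix_inv (deg_mat w))"

definition sigma :: "('n::finite \<Rightarrow> 'n \<Rightarrow> real) \<Rightarrow> 'n \<Rightarrow> real^'n" where
  "sigma w u = (1/2) *\<^sub>R (\<Sum>t. ((\<lambda>x. lazy_walk w *v x) ^^ t) (axis u 1) - stat_dist w)"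

definition approx_factor :: "real \<Rightarrow> real \<Rightarrow> real \<Rightarrow> bool" where
  "approx_factor \<epsilon> Rt R \<longleftrightarrow> (1 - \<epsilon>) * R \<le> Rt \<and> Rt \<le> (1 + \<epsilon>) * R"

end

theory Submission
  imports Defs
begin

text \<open>
  The lazy walk \<open>W = I/2 + A D\<^sup>-\<^sup>1/2\<close> equals \<open>I - L D\<^sup>-\<^sup>1/2\<close>. It is column-stochastic and
  fixes \<open>\<pi>\<close>, and since it is lazy and the graph is connected some power of it is entrywise
  positive; by Doeblin's argument that power contracts the \<open>\<ell>\<^sub>1\<close> norm of vectors with
  coordinate sum zero. Hence the series defining \<open>\<sigma>\<^sub>u\<close> converges, and its sum satisfies
  \<open>\<sigma>\<^sub>u - W \<sigma>\<^sub>u = (1\<^sub>u - \<pi>)/2\<close>, i.e. \<open>L D\<^sup>-\<^sup>1 \<sigma>\<^sub>u = 1\<^sub>u - \<pi>\<close>.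
  So \<open>z = D\<^sup>-\<^sup>1 (\<sigma>\<^sub>u - \<sigma>\<^sub>v)\<close> solves \<open>L z = 1\<^sub>u - 1\<^sub>v\<close>, and as the pseudoinverse
  (explicitly \<open>(L + J/n)\<^sup>-\<^sup>1 - J/n\<close>) satisfies \<open>L L\<^sup>+ L = L\<close>, we get
  \<open>R(u,v) = z\<^sup>T L z = z\<^sub>u - z\<^sub>v\<close>: the quantity of the theorem computed with the exact \<open>\<sigma>\<close>.
  The approximation errors change it by at most \<open>\<epsilon>/(2 d\<^sub>u) + \<epsilon>/(2 d\<^sub>v)\<close>, while
  \<open>R(u,v) \<ge> 1/d\<^sub>u\<close> and \<open>R(u,v) \<ge> 1/d\<^sub>v\<close>.
\<close>

section \<open>Matrix inverses and the Moore-Penrose pseudoinverse\<close>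

lemma matrix_inv_eqI:
  fixes A B :: "'a::semiring_1^'n^'n"
  assumes "A ** B = mat 1" and "B ** A = mat 1"
  shows "matrix_inv A = B"
proof -
  have inv: "A ** matrix_inv A = mat 1 \<and> matrix_inv A ** A = mat 1"
    unfolding matrix_inv_def by (rule someI[of _ B]) (simp add: assms)
  have "matrix_inv A = matrix_inv A ** (A ** B)" using assms by simp
  also have "\<dots> = B" using inv by (simp add: matrix_mul_assoc)
  finally show ?thesis .
qed

lemma invertible_matrix_inv:
  assumes "invertible A"
  shows "A ** matrix_inv A = mat 1" and "matrix_inv A ** A = mat 1"
  using someI_ex[OF assms[unfolded invertible_def]] by (simp_all add: matrix_inv_def)

lemma diagonal_mult:
  fixes a b :: "'n::finite \<Rightarrow> real"
  shows "(\<chi> i j. if i = j then a i else 0) ** (\<chi> i j. if i = j then b i else 0)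
    = (\<chi> i j. if i = j then a i * b i else 0)"
  by (simp add: matrix_matrix_mult_def vec_eq_iff if_distrib[of "\<lambda>x. x * _"] cong: if_cong)

lemma matrix_inv_diagonal:
  fixes d :: "'n::finite \<Rightarrow> real"
  assumes "\<And>i. d i \<noteq> 0"
  shows "matrix_inv (\<chi> i j. if i = j then d i else 0) = (\<chi> i j. if i = j then 1 / d i else 0)"
  by (rule matrix_inv_eqI) (simp_all add: diagonal_mult assms mat_def vec_eq_iff)

lemma matrix_diff_ldistrib: "(A::real^'n::finite^'m) ** (B - C) = A ** B - A ** C"
  by (simp add: matrix_matrix_mult_def vec_eq_iff sum_subtractf right_diff_distrib)

lemma matrix_diff_rdistrib: "((A::real^'n::finite^'m) - B) ** C = A ** C - B ** C"
  by (simp add: matrix_matrix_mult_def vec_eq_iff sum_subtractf left_diff_distrib)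

lemma matrix_add_rdistrib: "((A::real^'n::finite^'m) + B) ** C = A ** C + B ** C"
  by (simp add: matrix_matrix_mult_def vec_eq_iff sum.distrib distrib_right)

definition penrose_conditions :: "real^'n::finite^'m::finite \<Rightarrow> real^'m^'n \<Rightarrow> bool" where
  "penrose_conditions A X \<longleftrightarrow> A ** X ** A = A \<and> X ** A ** X = X \<and>
     transpose (A ** X) = A ** X \<and> transpose (X ** A) = X ** A"

lemma penrose_conditions_unique:
  assumes "penrose_conditions A X" and "penrose_conditions A Y"
  shows "X = Y"
proof -
  have x: "A ** X ** A = A" "X ** A ** X = X" "transpose (A ** X) = A ** X" "transpose (X ** A) = X ** A"
    and y: "A ** Y ** A = A" "Y ** A ** Y = Y" "transpose (A ** Y) = A ** Y" "transpose (Y ** A) = Y ** A"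
    using assms by (simp_all add: penrose_conditions_def)
  have "X = X ** transpose (A ** X)" using x(2,3) by (simp add: matrix_mul_assoc)
  also have "\<dots> = X ** transpose X ** transpose (A ** Y ** A)"
    using y(1) by (simp add: matrix_transpose_mul matrix_mul_assoc)
  also have "\<dots> = X ** transpose (A ** X) ** transpose (A ** Y)"
    by (simp add: matrix_transpose_mul matrix_mul_assoc)
  also have "\<dots> = X ** A ** Y" using x(2,3) y(3) by (simp add: matrix_mul_assoc)
  finally have xy: "X = X ** A ** Y" .
  have "Y = transpose (Y ** A) ** Y" using y(2,4) by simp
  also have "\<dots> = transpose (A ** X ** A) ** transpose Y ** Y"
    using x(1) by (simp add: matrix_transpose_mul matrix_mul_assoc)
  also have "\<dots> = transpose (X ** A) ** transpose (Y ** A) ** Y"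
    by (simp add: matrix_transpose_mul matrix_mul_assoc)
  also have "\<dots> = X ** A ** (Y ** A ** Y)" using x(4) y(4) by (simp add: matrix_mul_assoc)
  also have "\<dots> = X ** A ** Y" using y(2) by simp
  finally show ?thesis using xy by simp
qed

lemma pinv_eqI: "penrose_conditions A X \<Longrightarrow> pinv A = X"
  unfolding pinv_def penrose_conditions_def[symmetric]
  by (blast intro: the1_equality penrose_conditions_unique)

definition all_ones :: "real^'n::finite^'n" where
  "all_ones = (\<chi> i j. 1)"

lemma transpose_all_ones: "transpose all_ones = all_ones"
  by (simp add: all_ones_def transpose_def vec_eq_iff)

lemma all_ones_mult_all_ones: "all_ones ** all_ones = real CARD('n) *\<^sub>R (all_ones :: real^'n::finite^'n)"
  by (simp add: all_ones_def matrix_matrix_mult_def vec_eq_iff)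

lemma mult_all_ones_eq_0: "A *v 1 = 0 \<Longrightarrow> A ** all_ones = 0"
  by (simp add: all_ones_def matrix_matrix_mult_def matrix_vector_mult_def vec_eq_iff)

text \<open>Both \<open>A ** X\<close> and \<open>X ** A\<close> turn out to be the orthogonal projection
  \<open>mat 1 - c *\<^sub>R all_ones\<close> onto the vectors with coordinate sum zero.\<close>

lemma penrose_conditions_shifted_inverse:
  fixes A :: "real^'n::finite^'n"
  defines "c \<equiv> 1 / real CARD('n)"
  assumes sym: "transpose A = A" and ones: "A *v 1 = 0"
    and inv: "invertible (A + c *\<^sub>R all_ones)"
  shows "penrose_conditions A (matrix_inv (A + c *\<^sub>R all_ones) - c *\<^sub>R all_ones)"
proof -
  define J :: "real^'n^'n" where "J = all_ones"
  define M where "M = A + c *\<^sub>R J"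
  define X where "X = matrix_inv M - c *\<^sub>R J"
  have cn: "c * CARD('n) = 1" by (simp add: c_def)
  have AJ: "A ** J = 0" using ones by (simp add: J_def mult_all_ones_eq_0)
  have JA: "J ** A = 0"
    by (metis AJ J_def transpose_all_ones sym matrix_transpose_mul transpose_transpose times0_left)
  have MJ: "M ** J = J" and JM: "J ** M = J"
    using cn by (simp_all add: M_def J_def matrix_add_rdistrib matrix_add_ldistrib AJ[unfolded J_def]
        JA[unfolded J_def] all_ones_mult_all_ones matrix_scalar_ac flip: scalar_matrix_assoc)
  have Mi: "M ** matrix_inv M = mat 1" "matrix_inv M ** M = mat 1"
    using invertible_matrix_inv[OF inv] by (simp_all add: M_def J_def)
  have MiJ: "matrix_inv M ** J = J" by (metis MJ Mi(2) matrix_mul_assoc matrix_mul_lid)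
  have JMi: "J ** matrix_inv M = J" by (metis JM Mi(1) matrix_mul_assoc matrix_mul_rid)
  have A: "A = M - c *\<^sub>R J" by (simp add: M_def)
  have AX: "A ** X = mat 1 - c *\<^sub>R J"
    by (simp add: X_def matrix_diff_ldistrib matrix_scalar_ac AJ flip: scalar_matrix_assoc)
      (simp add: A matrix_diff_rdistrib Mi JMi flip: scalar_matrix_assoc)
  have XA: "X ** A = mat 1 - c *\<^sub>R J"
    by (simp add: X_def matrix_diff_rdistrib JA flip: scalar_matrix_assoc)
      (simp add: A matrix_diff_ldistrib Mi MiJ matrix_scalar_ac flip: scalar_matrix_assoc)
  have JX: "J ** X = 0"
    using cn by (simp add: X_def J_def matrix_diff_ldistrib JMi[unfolded J_def] all_ones_mult_all_ones
        matrix_scalar_ac flip: scalar_matrix_assoc)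
  have "transpose (mat 1 - c *\<^sub>R J) = mat 1 - c *\<^sub>R J"
    by (simp add: J_def all_ones_def transpose_def mat_def vec_eq_iff)
  then have "penrose_conditions A X"
    unfolding penrose_conditions_def AX XA
    by (simp add: matrix_diff_rdistrib JA JX flip: scalar_matrix_assoc)
  then show ?thesis by (simp add: X_def M_def J_def)
qed

section \<open>Column-stochastic matrices\<close>

definition col_stochastic :: "real^'n::finite^'n \<Rightarrow> bool" where
  "col_stochastic P \<longleftrightarrow> (\<forall>i j. 0 \<le> P $ i $ j) \<and> (\<forall>j. (\<Sum>i\<in>UNIV. P $ i $ j) = 1)"

definition l1_norm :: "real^'n::finite \<Rightarrow> real" where
  "l1_norm x = (\<Sum>i\<in>UNIV. \<bar>x $ i\<bar>)"

fun matpow :: "real^'n::finite^'n \<Rightarrow> nat \<Rightarrow> real^'n^'n" where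
  "matpow P 0 = mat 1"
| "matpow P (Suc t) = P ** matpow P t"

lemma funpow_matrix_vector_mult: "((\<lambda>x. P *v x) ^^ t) x = matpow P t *v x"
  by (induction t) (simp_all add: matrix_vector_mul_assoc)

lemma matpow_add: "matpow P (s + t) = matpow P s ** matpow P t"
  by (induction s) (simp_all add: matrix_mul_assoc)

lemma matpow_fixpoint: "P *v x = x \<Longrightarrow> matpow P t *v x = x"
  by (induction t) (simp_all flip: matrix_vector_mul_assoc)

lemma sum_matrix_vector_mult:
  "(\<Sum>i\<in>UNIV. (M *v x) $ i) = (\<Sum>j\<in>UNIV. (\<Sum>i\<in>UNIV. M $ i $ j) * x $ j)"
  by (simp add: matrix_vector_mult_def sum_distrib_right) (rule sum.swap)

lemma col_stochastic_sum_preserving: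
  "col_stochastic P \<Longrightarrow> (\<Sum>i\<in>UNIV. (P *v x) $ i) = (\<Sum>i\<in>UNIV. x $ i)"
  by (simp add: sum_matrix_vector_mult col_stochastic_def)

lemma col_stochastic_mat_1: "col_stochastic (mat 1)"
  by (simp add: col_stochastic_def mat_def)

lemma col_stochastic_mult:
  assumes "col_stochastic A" and "col_stochastic B"
  shows "col_stochastic (A ** B)"
proof -
  have "0 \<le> (A ** B) $ i $ j" for i j
    using assms by (auto simp: col_stochastic_def matrix_matrix_mult_def intro!: sum_nonneg)
  moreover have "(\<Sum>i\<in>UNIV. (A ** B) $ i $ j) = 1" for j
  proof -
    have "(\<Sum>i\<in>UNIV. (A ** B) $ i $ j) = (\<Sum>i\<in>UNIV. (A *v column j B) $ i)"
      by (simp add: matrix_matrix_mult_def matrix_vector_mult_def column_def)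
    also have "\<dots> = 1"
      using col_stochastic_sum_preserving[OF assms(1)] assms(2)
      by (simp add: col_stochastic_def column_def)
    finally show ?thesis .
  qed
  ultimately show ?thesis by (simp add: col_stochastic_def)
qed

lemma col_stochastic_matpow: "col_stochastic P \<Longrightarrow> col_stochastic (matpow P t)"
  by (induction t) (simp_all add: col_stochastic_mat_1 col_stochastic_mult)

lemma l1_norm_matrix_vector_mult_le:
  assumes "\<And>i j. 0 \<le> M $ i $ j" and "\<And>j. (\<Sum>i\<in>UNIV. M $ i $ j) \<le> c"
  shows "l1_norm (M *v x) \<le> c * l1_norm x"
proof -
  have "l1_norm (M *v x) \<le> (\<Sum>i\<in>UNIV. \<Sum>j\<in>UNIV. M $ i $ j * \<bar>x $ j\<bar>)"
    unfolding l1_norm_def matrix_vector_mult_def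
    by (auto intro!: sum_mono order_trans[OF sum_abs] simp: abs_mult assms(1))
  also have "\<dots> = (\<Sum>j\<in>UNIV. (\<Sum>i\<in>UNIV. M $ i $ j) * \<bar>x $ j\<bar>)"
    by (subst sum.swap) (simp add: sum_distrib_right)
  also have "\<dots> \<le> (\<Sum>j\<in>UNIV. c * \<bar>x $ j\<bar>)"
    by (intro sum_mono mult_right_mono assms(2)) simp
  finally show ?thesis by (simp add: l1_norm_def sum_distrib_left)
qed

text \<open>Doeblin's argument: on vectors with coordinate sum zero, \<open>Q\<close> acts like the nonnegative
  matrix with entries \<open>Q $ i $ j - \<delta>\<close>, whose column sums are \<open>1 - n \<delta>\<close>.\<close>

lemma col_stochastic_l1_contraction:
  fixes Q :: "real^'n::finite^'n" and \<delta> :: real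
  assumes "col_stochastic Q" and "\<And>i j. \<delta> \<le> Q $ i $ j" and "(\<Sum>i\<in>UNIV. x $ i) = 0"
  shows "l1_norm (Q *v x) \<le> (1 - CARD('n) * \<delta>) * l1_norm x"
proof -
  define M :: "real^'n^'n" where "M = (\<chi> i j. Q $ i $ j - \<delta>)"
  have "Q *v x = M *v x"
    using assms(3)
    by (simp add: M_def matrix_vector_mult_def vec_eq_iff left_diff_distrib sum_subtractf
        flip: sum_distrib_left)
  moreover have "(\<Sum>i\<in>UNIV. M $ i $ j) = 1 - CARD('n) * \<delta>" for j
    using assms(1) by (simp add: M_def sum_subtractf col_stochastic_def)
  ultimately show ?thesis
    using assms(2) by (simp add: l1_norm_matrix_vector_mult_le M_def)
qed

lemma positive_col_stochastic_l1_contraction: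
  fixes Q :: "real^'n::finite^'n"
  assumes "col_stochastic Q" and "\<And>i j. 0 < Q $ i $ j"
  obtains c where "c < 1" and "\<And>x. (\<Sum>i\<in>UNIV. x $ i) = 0 \<Longrightarrow> l1_norm (Q *v x) \<le> c * l1_norm x"
proof -
  define \<delta> where "\<delta> = Min (range (\<lambda>(i, j). Q $ i $ j))"
  have "0 < \<delta>" using assms(2) by (auto simp: \<delta>_def)
  moreover have "\<delta> \<le> Q $ i $ j" for i j unfolding \<delta>_def by (rule Min_le) auto
  ultimately show ?thesis
    using that[of "1 - CARD('n) * \<delta>"] col_stochastic_l1_contraction[OF assms(1)] by auto
qed

lemma power_div_mult_le_root_power:
  fixes c :: real
  assumes "0 < c" and "c \<le> 1" and "0 < K"
  shows "c ^ (t div K) * c \<le> root K c ^ t"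
proof -
  define \<rho> where "\<rho> = root K c"
  have \<rho>: "0 < \<rho>" "\<rho> \<le> 1" "\<rho> ^ K = c"
    using assms by (simp_all add: \<rho>_def real_root_gt_zero real_root_pow_pos)
  have "c ^ (t div K) * c = \<rho> ^ (K * (t div K)) * \<rho> ^ K" by (simp add: power_mult \<rho>(3))
  also have "\<dots> \<le> \<rho> ^ (K * (t div K)) * \<rho> ^ (t mod K)"
    using \<rho> \<open>0 < K\<close> by (intro mult_left_mono power_decreasing) auto
  also have "\<dots> = \<rho> ^ t" by (metis power_add mult_div_mod_eq)
  finally show ?thesis unfolding \<rho>_def .
qed

lemma le_power_div_if_block_contraction:
  fixes f :: "nat \<Rightarrow> real"
  assumes "0 < K" and "0 \<le> c" and "decseq f" and contr: "\<And>t. f (t + K) \<le> c * f t"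
  shows "f t \<le> c ^ (t div K) * f 0"
proof (induction t rule: less_induct)
  case (less t)
  show ?case
  proof (cases "t < K")
    case True
    then show ?thesis using decseqD[OF \<open>decseq f\<close>, of 0 t] by simp
  next
    case False
    then obtain s where t: "t = s + K" by (metis add.commute le_add_diff_inverse not_less)
    have "f t \<le> c * f s" using contr t by simp
    also have "\<dots> \<le> c * (c ^ (s div K) * f 0)"
      using less[of s] t \<open>0 < K\<close> \<open>0 \<le> c\<close> by (intro mult_left_mono) auto
    also have "\<dots> = c ^ (t div K) * f 0" using t \<open>0 < K\<close> by simp
    finally show ?thesis .
  qed
qed

lemma summable_if_block_contraction:
  fixes f :: "nat \<Rightarrow> real"
  assumes "0 < K" and "c < 1" and nonneg: "\<And>t. 0 \<le> f t"
    and decr: "\<And>t. f (Suc t) \<le> f t" and contr: "\<And>t. f (t + K) \<le> c * f t"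
  shows "summable f"
proof -
  define c' where "c' = max c (1/2)"
  have c': "0 < c'" "c' < 1" using assms(2) by (auto simp: c'_def)
  have "f (t + K) \<le> c' * f t" for t
    using contr[of t] mult_right_mono[OF max.cobounded1 nonneg[of t], of c "1/2"] by (simp add: c'_def)
  moreover have "decseq f" using decr by (rule decseq_SucI)
  ultimately have block: "f t \<le> c' ^ (t div K) * f 0" for t
    using le_power_div_if_block_contraction[OF \<open>0 < K\<close>] c' by simp
  have "summable (\<lambda>t. root K c' ^ t / c' * f 0)"
    using c' \<open>0 < K\<close>
    by (intro summable_mult2 summable_divide summable_geometric) (simp add: real_root_gt_zero)
  then show ?thesis
  proof (rule summable_comparison_test')
    fix t
    have "c' ^ (t div K) \<le> root K c' ^ t / c'"
      using power_div_mult_le_root_power[OF c'(1) _ \<open>0 < K\<close>, of t] c' by (simp add: field_simps)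
    then have "c' ^ (t div K) * f 0 \<le> root K c' ^ t / c' * f 0"
      using nonneg[of 0] by (rule mult_right_mono)
    then show "norm (f t) \<le> root K c' ^ t / c' * f 0"
      using block[of t] nonneg[of t] by simp
  qed
qed

lemma summable_matpow_sum_zero:
  assumes P: "col_stochastic P" and "0 < K" and pos: "\<And>i j. 0 < matpow P K $ i $ j"
    and x: "(\<Sum>i\<in>UNIV. x $ i) = 0"
  shows "summable (\<lambda>t. matpow P t *v x)"
proof -
  obtain c where "c < 1"
    and c: "\<And>y. (\<Sum>i\<in>UNIV. y $ i) = 0 \<Longrightarrow> l1_norm (matpow P K *v y) \<le> c * l1_norm y"
    using positive_col_stochastic_l1_contraction[OF col_stochastic_matpow[OF P] pos] by blast
  define f where "f t = l1_norm (matpow P t *v x)" for t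
  have "summable f"
  proof (rule summable_if_block_contraction[OF \<open>0 < K\<close> \<open>c < 1\<close>])
    show "0 \<le> f t" for t by (simp add: f_def l1_norm_def sum_nonneg)
    show "f (Suc t) \<le> f t" for t
      using l1_norm_matrix_vector_mult_le[of P 1 "matpow P t *v x"] P
      by (simp add: f_def col_stochastic_def matrix_vector_mul_assoc)
    have "matpow P (t + K) = matpow P K ** matpow P t" for t
      by (metis add.commute matpow_add)
    then show "f (t + K) \<le> c * f t" for t
      using c[of "matpow P t *v x"] col_stochastic_sum_preserving[OF col_stochastic_matpow[OF P]] x
      by (simp add: f_def matrix_vector_mul_assoc)
  qed
  then show ?thesis
    by (rule summable_comparison_test') (simp add: f_def l1_norm_def norm_le_l1_cart)
qed

lemma suminf_matpow_fixpoint: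
  assumes "summable (\<lambda>t. matpow P t *v x)"
  shows "(\<Sum>t. matpow P t *v x) - P *v (\<Sum>t. matpow P t *v x) = x"
proof -
  have "P *v (\<Sum>t. matpow P t *v x) = (\<Sum>t. P *v (matpow P t *v x))"
    by (rule bounded_linear.suminf[OF matrix_vector_mul_bounded_linear assms])
  also have "\<dots> = (\<Sum>t. matpow P (Suc t) *v x)" by (simp add: matrix_vector_mul_assoc)
  also have "\<dots> = (\<Sum>t. matpow P t *v x) - x" using suminf_split_head[OF assms] by simp
  finally show ?thesis by simp
qed

lemma matpow_nonneg:
  assumes "\<And>i j. 0 \<le> P $ i $ j"
  shows "0 \<le> matpow P t $ i $ j"
  by (induction t arbitrary: i j)
    (auto simp: mat_def matrix_matrix_mult_def assms intro!: sum_nonneg)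

lemma matpow_Suc_entry_ge:
  assumes "\<And>i j. 0 \<le> P $ i $ j"
  shows "P $ i $ k * matpow P t $ k $ j \<le> matpow P (Suc t) $ i $ j"
  unfolding matpow.simps matrix_matrix_mult_def
  by (simp, rule member_le_sum) (auto simp: assms matpow_nonneg)

lemma matpow_positive_step:
  assumes "\<And>i j. 0 \<le> P $ i $ j" and "0 < P $ i $ k" and "0 < matpow P t $ k $ j"
  shows "0 < matpow P (Suc t) $ i $ j"
  using matpow_Suc_entry_ge[OF assms(1), of i k t j] mult_pos_pos[OF assms(2,3)] by linarith

lemma matpow_positive_mono:
  assumes "\<And>i j. 0 \<le> P $ i $ j" and "\<And>i. 0 < P $ i $ i"
    and "0 < matpow P t $ i $ j" and "t \<le> s"
  shows "0 < matpow P s $ i $ j"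
  using assms(4,3)
  by (induction s rule: dec_induct) (use matpow_positive_step[OF assms(1) assms(2)] in blast)+

lemma matpow_positive_if_reachable:
  assumes "\<And>i j. 0 \<le> P $ i $ j" and "(j, i) \<in> {(k, l). 0 < P $ l $ k}\<^sup>*"
  shows "\<exists>t. 0 < matpow P t $ i $ j"
  using assms(2)
proof (induction rule: rtrancl_induct)
  case base
  show ?case by (rule exI[of _ 0]) (simp add: mat_def)
next
  case (step k l)
  then show ?case by (auto intro: matpow_positive_step[OF assms(1)])
qed

text \<open>A positive diagonal keeps positive entries of the powers positive, so one exponent beyond
  all the hitting times serves every pair of indices.\<close>

lemma matpow_positive_if_irreducible:
  assumes nonneg: "\<And>i j. 0 \<le> P $ i $ j" and diag: "\<And>i. 0 < P $ i $ i"
    and irreducible: "\<And>i j. (j, i) \<in> {(k, l). 0 < P $ l $ k}\<^sup>*"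
  shows "\<exists>K>0. \<forall>i j. 0 < matpow P K $ i $ j"
proof -
  obtain T where T: "\<And>i j. 0 < matpow P (T i j) $ i $ j"
    using matpow_positive_if_reachable[OF nonneg irreducible] by metis
  define K where "K = Suc (\<Sum>i\<in>UNIV. \<Sum>j\<in>UNIV. T i j)"
  have "T i j \<le> K" for i j
  proof -
    have "T i j \<le> (\<Sum>j'\<in>UNIV. T i j')" by (rule member_le_sum) auto
    also have "\<dots> \<le> (\<Sum>i'\<in>UNIV. \<Sum>j'\<in>UNIV. T i' j')" by (rule member_le_sum) auto
    finally show ?thesis by (simp add: K_def)
  qed
  then have "0 < matpow P K $ i $ j" for i j
    using matpow_positive_mono[OF nonneg diag T] by blast
  moreover have "0 < K" by (simp add: K_def)
  ultimately show ?thesis by blast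
qed

section \<open>Weighted graphs, Laplacians and the lazy random walk\<close>

lemma approx_factor_if_abs_diff_le: "\<bar>Rt - R\<bar> \<le> \<epsilon> * R \<Longrightarrow> approx_factor \<epsilon> Rt R"
  by (simp add: approx_factor_def abs_le_iff algebra_simps)

locale weighted_graph =
  fixes w :: "'n::finite \<Rightarrow> 'n \<Rightarrow> real"
  assumes sym: "\<And>u v. w u v = w v u" and nonneg: "\<And>u v. 0 \<le> w u v"
begin

lemma deg_mat_mult_vector: "(deg_mat w *v z) $ i = deg w i * z $ i"
  by (simp add: deg_mat_def matrix_vector_mult_def if_distrib if_distribR cong: if_cong)

lemma lap_mult_vector: "(lap w *v z) $ i = deg w i * z $ i - (\<Sum>j\<in>UNIV. w i j * z $ j)"
  unfolding lap_def matrix_vector_mult_diff_rdistrib vector_minus_component deg_mat_mult_vector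
  by (simp add: adj_mat_def matrix_vector_mult_def)

lemma transpose_lap: "transpose (lap w) = lap w"
  by (simp add: lap_def deg_mat_def adj_mat_def transpose_def vec_eq_iff sym)

lemma lap_inner_commute: "y \<bullet> (lap w *v z) = z \<bullet> (lap w *v y)"
  by (metis dot_lmul_matrix inner_commute transpose_lap transpose_matrix_vector)

lemma lap_mult_ones: "lap w *v 1 = 0"
  by (simp add: vec_eq_iff lap_mult_vector deg_def)

lemma lap_quadratic_form:
  "z \<bullet> (lap w *v z) = (1/2) * (\<Sum>i\<in>UNIV. \<Sum>j\<in>UNIV. w i j * (z $ i - z $ j)\<^sup>2)"
proof -
  have "z \<bullet> (lap w *v z) = (\<Sum>i\<in>UNIV. \<Sum>j\<in>UNIV. w i j * (z $ i * (z $ i - z $ j)))"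
    by (simp add: inner_vec_def lap_mult_vector deg_def sum_distrib_left sum_distrib_right
        algebra_simps flip: sum_subtractf)
  moreover have "\<dots> = (\<Sum>i\<in>UNIV. \<Sum>j\<in>UNIV. w i j * (z $ j * (z $ j - z $ i)))"
    by (subst sum.swap) (simp add: sym)
  moreover have "(\<Sum>i\<in>UNIV. \<Sum>j\<in>UNIV. w i j * (z $ i * (z $ i - z $ j)))
      + (\<Sum>i\<in>UNIV. \<Sum>j\<in>UNIV. w i j * (z $ j * (z $ j - z $ i)))
      = (\<Sum>i\<in>UNIV. \<Sum>j\<in>UNIV. w i j * (z $ i - z $ j)\<^sup>2)"
    unfolding sum.distrib[symmetric] by (intro sum.cong refl) (simp add: power2_eq_square algebra_simps)
  ultimately show ?thesis by linarith
qed

lemma lap_quadratic_form_nonneg: "0 \<le> z \<bullet> (lap w *v z)"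
  unfolding lap_quadratic_form by (simp add: sum_nonneg nonneg)

lemma lap_quadratic_form_diff:
  "(y - t *\<^sub>R z) \<bullet> (lap w *v (y - t *\<^sub>R z))
     = y \<bullet> (lap w *v y) - 2 * t * (y \<bullet> (lap w *v z)) + t\<^sup>2 * (z \<bullet> (lap w *v z))"
  using lap_inner_commute[of z y]
  by (simp add: algebra_simps power2_eq_square)

lemma axis_lap_axis_le_deg: "axis a 1 \<bullet> (lap w *v axis a 1) \<le> deg w a"
  using nonneg[of a a] by (simp only: inner_axis') (simp add: lap_mult_vector axis_def if_distrib cong: if_cong)

text \<open>Evaluate the nonnegative quadratic form at \<open>1\<^sub>u - d\<^sub>u z\<close>.\<close>

lemma one_le_deg_mult_lap_quadratic_form:
  assumes "(lap w *v z) $ u = 1" and "0 < deg w u"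
  shows "1 \<le> deg w u * (z \<bullet> (lap w *v z))"
proof -
  let ?d = "deg w u" and ?R = "z \<bullet> (lap w *v z)"
  have "0 \<le> (axis u 1 - ?d *\<^sub>R z) \<bullet> (lap w *v (axis u 1 - ?d *\<^sub>R z))"
    by (rule lap_quadratic_form_nonneg)
  also have "\<dots> \<le> ?d - 2 * ?d + ?d\<^sup>2 * ?R"
    using axis_lap_axis_le_deg[of u] assms(1) by (simp add: lap_quadratic_form_diff inner_axis')
  also have "\<dots> = ?d * (?d * ?R - 1)" by (simp add: power2_eq_square algebra_simps)
  finally show ?thesis using assms(2) by (simp add: zero_le_mult_iff)
qed

lemma stat_dist_entry: "stat_dist w $ i = deg w i / (\<Sum>j\<in>UNIV. deg w j)"
  by (simp add: stat_dist_def deg_mat_def matrix_vector_mult_def inner_vec_def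
      if_distrib if_distribR cong: if_cong)

lemma eff_res_commute: "eff_res w v u = eff_res w u v"
  by (simp add: eff_res_def matrix_vector_mult_diff_distrib inner_diff_left inner_diff_right)

end

locale connected_weighted_graph = weighted_graph w for w :: "'n::finite \<Rightarrow> 'n \<Rightarrow> real" +
  assumes connected: "connected_graph w" and nontrivial: "\<exists>u v :: 'n. u \<noteq> v"
begin

lemma reachable: "(u, v) \<in> {(x, y). 0 < w x y}\<^sup>*"
  using connected by (simp add: connected_graph_def)

lemma deg_pos: "0 < deg w u"
proof -
  obtain a b :: 'n where "a \<noteq> b" using nontrivial by blast
  then obtain v where "v \<noteq> u" by (metis (full_types))
  obtain y where "0 < w u y"
    using reachable[of u v] \<open>v \<noteq> u\<close> by (cases rule: converse_rtranclE) auto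
  moreover have "w u y \<le> deg w u" unfolding deg_def by (rule member_le_sum) (auto simp: nonneg)
  ultimately show ?thesis by linarith
qed

lemma lap_quadratic_form_eq_0_imp_const:
  assumes "z \<bullet> (lap w *v z) = 0"
  shows "z $ a = z $ b"
proof -
  have terms: "w i j * (z $ i - z $ j)\<^sup>2 = 0" for i j
    using assms by (simp add: lap_quadratic_form sum_nonneg_eq_0_iff sum_nonneg nonneg)
  have "z $ i = z $ j" if "0 < w i j" for i j using terms[of i j] that by auto
  with reachable[of a b] show ?thesis by (induction rule: rtrancl_induct) auto
qed

lemma invertible_lap_plus_all_ones: "invertible (lap w + (1 / CARD('n)) *\<^sub>R all_ones)"
  unfolding invertible_left_inverse matrix_left_invertible_ker
proof (intro allI impI)
  fix x :: "real^'n"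
  let ?c = "1 / real CARD('n)" and ?s = "\<Sum>i\<in>UNIV. x $ i"
  assume "(lap w + ?c *\<^sub>R all_ones) *v x = 0"
  have "all_ones *v x = ?s *\<^sub>R 1"
    by (simp add: all_ones_def matrix_vector_mult_def vec_eq_iff)
  moreover have "x \<bullet> 1 = ?s" by (simp add: inner_vec_def)
  moreover have "0 = x \<bullet> ((lap w + ?c *\<^sub>R all_ones) *v x)" using \<open>_ = 0\<close> by simp
  ultimately have "0 = x \<bullet> (lap w *v x) + ?c * ?s\<^sup>2"
    by (simp add: matrix_vector_mult_add_rdistrib inner_add_right power2_eq_square
        flip: scaleR_matrix_vector_assoc)
  then have "x \<bullet> (lap w *v x) = 0" and "?s = 0"
    using lap_quadratic_form_nonneg[of x] by (simp_all add: add_nonneg_eq_0_iff)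
  then have "x $ i = x $ a" for i a using lap_quadratic_form_eq_0_imp_const by blast
  then have "?s = (\<Sum>i\<in>(UNIV :: 'n set). x $ a)" for a by (intro sum.cong) auto
  then have "?s = CARD('n) * x $ a" for a by simp
  then show "x = 0" using \<open>?s = 0\<close> by (simp add: vec_eq_iff)
qed

lemma penrose_conditions_pinv_lap: "penrose_conditions (lap w) (pinv (lap w))"
  using penrose_conditions_shifted_inverse[OF transpose_lap lap_mult_ones invertible_lap_plus_all_ones]
  by (simp add: pinv_eqI)

lemma eff_res_eq_lap_quadratic_form:
  assumes "lap w *v z = axis u 1 - axis v 1"
  shows "eff_res w u v = z \<bullet> (lap w *v z)"
proof -
  have "eff_res w u v = (lap w *v z) \<bullet> (pinv (lap w) *v (lap w *v z))"
    by (simp add: eff_res_def assms)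
  also have "\<dots> = z \<bullet> (lap w *v (pinv (lap w) *v (lap w *v z)))"
    by (metis inner_commute lap_inner_commute)
  also have "lap w *v (pinv (lap w) *v (lap w *v z)) = lap w *v z"
    using penrose_conditions_pinv_lap by (simp add: penrose_conditions_def matrix_vector_mul_assoc matrix_mul_assoc)
  finally show ?thesis .
qed

lemma matrix_inv_deg_mat: "matrix_inv (deg_mat w) = (\<chi> i j. if i = j then 1 / deg w i else 0)"
  unfolding deg_mat_def using deg_pos by (intro matrix_inv_diagonal) (metis less_irrefl)

lemma inverse_deg_mat_mult_vector: "(matrix_inv (deg_mat w) *v x) $ i = x $ i / deg w i"
  by (simp add: matrix_inv_deg_mat matrix_vector_mult_def if_distrib if_distribR cong: if_cong)

lemma lazy_walk_entry: "lazy_walk w $ i $ j = (if i = j then 1/2 else 0) + w i j / (2 * deg w j)"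
  by (simp add: lazy_walk_def matrix_inv_deg_mat adj_mat_def matrix_matrix_mult_def mat_def
      if_distrib if_distribR cong: if_cong)

lemma col_stochastic_lazy_walk: "col_stochastic (lazy_walk w)"
proof -
  have col: "(\<Sum>i\<in>UNIV. w i j / (2 * deg w j)) = 1/2" for j
    using deg_pos[of j] by (simp add: deg_def sym[of _ j] flip: sum_divide_distrib)
  have "0 \<le> w i j / (2 * deg w j)" for i j using nonneg[of i j] deg_pos[of j] by simp
  then show ?thesis by (auto simp: col_stochastic_def lazy_walk_entry sum.distrib col)
qed

lemma lazy_walk_diag_pos: "0 < lazy_walk w $ i $ i"
  using nonneg[of i i] deg_pos[of i] by (simp add: lazy_walk_entry add_pos_nonneg)

lemma lazy_walk_irreducible: "(j, i) \<in> {(k, l). 0 < lazy_walk w $ l $ k}\<^sup>*"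
proof -
  have "{(x, y). 0 < w x y} \<subseteq> {(k, l). 0 < lazy_walk w $ l $ k}"
    using deg_pos by (auto simp: lazy_walk_entry sym intro: add_nonneg_pos)
  then show ?thesis using reachable rtrancl_mono by blast
qed

lemma lazy_walk_complement:
  "x - lazy_walk w *v x = (1/2) *\<^sub>R (lap w *v (matrix_inv (deg_mat w) *v x))"
proof -
  let ?y = "matrix_inv (deg_mat w) *v x"
  have "lazy_walk w *v x = (1/2) *\<^sub>R x + (1/2) *\<^sub>R (adj_mat w *v ?y)"
    by (simp add: lazy_walk_def matrix_vector_mult_add_rdistrib
        flip: matrix_vector_mul_assoc scaleR_matrix_vector_assoc)
  moreover have "deg_mat w *v ?y = x"
    using less_imp_neq[OF deg_pos, symmetric]
    by (simp add: vec_eq_iff deg_mat_mult_vector inverse_deg_mat_mult_vector)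
  then have "lap w *v ?y = x - adj_mat w *v ?y"
    by (simp add: lap_def matrix_vector_mult_diff_rdistrib)
  ultimately show ?thesis by (simp add: vec_eq_iff algebra_simps)
qed

lemma sum_stat_dist: "(\<Sum>i\<in>UNIV. stat_dist w $ i) = 1"
proof -
  have "0 < (\<Sum>j\<in>UNIV. deg w j)" using deg_pos by (simp add: sum_pos)
  then show ?thesis by (simp add: stat_dist_entry flip: sum_divide_distrib)
qed

lemma lazy_walk_stat_dist: "lazy_walk w *v stat_dist w = stat_dist w"
proof -
  have "matrix_inv (deg_mat w) *v stat_dist w = (1 / (\<Sum>j\<in>UNIV. deg w j)) *\<^sub>R 1"
    using less_imp_neq[OF deg_pos, symmetric]
    by (simp add: vec_eq_iff inverse_deg_mat_mult_vector stat_dist_entry)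
  then have "stat_dist w - lazy_walk w *v stat_dist w = 0"
    by (simp add: lazy_walk_complement matrix_vector_mult_scaleR lap_mult_ones)
  then show ?thesis by simp
qed

lemma sigma_eq_suminf:
  "sigma w u = (1/2) *\<^sub>R (\<Sum>t. matpow (lazy_walk w) t *v (axis u 1 - stat_dist w))"
  by (simp add: sigma_def funpow_matrix_vector_mult matrix_vector_mult_diff_distrib
      matpow_fixpoint[OF lazy_walk_stat_dist])

lemma lap_deg_inverse_sigma:
  "lap w *v (matrix_inv (deg_mat w) *v sigma w u) = axis u 1 - stat_dist w"
proof -
  let ?x = "axis u 1 - stat_dist w"
  obtain K where "0 < K" and K: "\<forall>i j. 0 < matpow (lazy_walk w) K $ i $ j"
    using matpow_positive_if_irreducible[OF _ lazy_walk_diag_pos lazy_walk_irreducible]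
      col_stochastic_lazy_walk by (auto simp: col_stochastic_def)
  have "(\<Sum>i\<in>UNIV. ?x $ i) = 0"
    using sum_stat_dist by (simp add: sum_subtractf axis_def)
  then have "summable (\<lambda>t. matpow (lazy_walk w) t *v ?x)"
    using summable_matpow_sum_zero[OF col_stochastic_lazy_walk \<open>0 < K\<close>] K by blast
  then have "sigma w u - lazy_walk w *v sigma w u = (1/2) *\<^sub>R ?x"
    unfolding sigma_eq_suminf
    by (metis suminf_matpow_fixpoint matrix_vector_mult_scaleR scaleR_diff_right)
  then show ?thesis by (simp add: lazy_walk_complement)
qed

definition potential :: "'n \<Rightarrow> 'n \<Rightarrow> real^'n" where
  "potential u v = matrix_inv (deg_mat w) *v (sigma w u - sigma w v)"

lemma lap_potential: "lap w *v potential u v = axis u 1 - axis v 1"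
  by (simp add: potential_def matrix_vector_mult_diff_distrib lap_deg_inverse_sigma)

lemma eff_res_eq_potential: "eff_res w u v = potential u v $ u - potential u v $ v"
  using lap_potential[of u v]
  by (simp add: eff_res_eq_lap_quadratic_form inner_diff_right inner_axis)

lemma eff_res_eq_sigma:
  "eff_res w u v = sigma w u $ u / deg w u - sigma w u $ v / deg w v
                  + sigma w v $ v / deg w v - sigma w v $ u / deg w u"
  by (simp add: eff_res_eq_potential potential_def inverse_deg_mat_mult_vector diff_divide_distrib)

lemma inverse_deg_le_eff_res:
  assumes "u \<noteq> v"
  shows "1 / deg w u \<le> eff_res w u v"
proof -
  have "(lap w *v potential u v) $ u = 1" using assms by (simp add: lap_potential axis_def)
  then have "1 \<le> deg w u * eff_res w u v"
    using one_le_deg_mult_lap_quadratic_form deg_pos lap_potential eff_res_eq_lap_quadratic_form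
    by metis
  then show ?thesis using deg_pos[of u] by (simp add: divide_le_eq mult.commute)
qed

lemma approx_factor_eff_res_perturbed:
  assumes "u \<noteq> v" and "0 \<le> \<epsilon>" and err: "\<bar>e u\<bar> \<le> \<epsilon> / 2" "\<bar>e v\<bar> \<le> \<epsilon> / 2"
  shows "approx_factor \<epsilon> (eff_res w u v + e u / deg w u - e v / deg w v) (eff_res w u v)"
proof (rule approx_factor_if_abs_diff_le)
  let ?R = "eff_res w u v"
  have term_le: "\<bar>e x / deg w x\<bar> \<le> \<epsilon> / 2 * ?R"
    if "\<bar>e x\<bar> \<le> \<epsilon> / 2" and "1 / deg w x \<le> ?R" for x
  proof -
    have "\<bar>e x\<bar> * (1 / deg w x) \<le> \<epsilon> / 2 * ?R"
      using that \<open>0 \<le> \<epsilon>\<close> deg_pos[of x] by (intro mult_mono) auto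
    then show ?thesis using deg_pos[of x] by (simp add: abs_divide)
  qed
  have "1 / deg w v \<le> ?R"
    using inverse_deg_le_eff_res[of v u] \<open>u \<noteq> v\<close> by (simp add: eff_res_commute)
  then have "\<bar>e u / deg w u\<bar> + \<bar>e v / deg w v\<bar> \<le> \<epsilon> * ?R"
    using term_le[OF err(1) inverse_deg_le_eff_res[OF \<open>u \<noteq> v\<close>]] term_le[OF err(2)] by linarith
  then show "\<bar>?R + e u / deg w u - e v / deg w v - ?R\<bar> \<le> \<epsilon> * ?R"
    using abs_triangle_ineq4[of "e u / deg w u" "e v / deg w v"] by simp
qed

end

theorem lemma3p4:
  fixes w :: "'n::finite \<Rightarrow> 'n \<Rightarrow> real"
    and \<epsilon> :: real
    and \<sigma>t :: "'n \<Rightarrow> real^'n"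
  assumes sym: "\<And>u v. w u v = w v u"
    and nonneg: "\<And>u v. w u v \<ge> 0"
    and noloop: "\<And>u. w u u = 0"
    and conn: "connected_graph w"
    and eps: "\<epsilon> > 0"
    and approx: "\<And>u. infnorm (\<sigma>t u - sigma w u) \<le> \<epsilon> / 4"
    and edge: "w u v > 0"
  shows "approx_factor \<epsilon>
           ((\<sigma>t u $ u) / deg w u - (\<sigma>t u $ v) / deg w v
            + (\<sigma>t v $ v) / deg w v - (\<sigma>t v $ u) / deg w u)
           (eff_res w u v)"
proof -
  have "u \<noteq> v" using edge noloop by auto
  interpret connected_weighted_graph w
    using sym nonneg conn \<open>u \<noteq> v\<close> by unfold_locales blast+
  define e where "e x = (\<sigma>t u - sigma w u) $ x - (\<sigma>t v - sigma w v) $ x" for x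
  have "\<bar>e x\<bar> \<le> \<epsilon> / 2" for x
    using component_le_infnorm_cart[of "\<sigma>t u - sigma w u" x] approx[of u]
      component_le_infnorm_cart[of "\<sigma>t v - sigma w v" x] approx[of v]
    unfolding e_def by linarith
  then have "approx_factor \<epsilon> (eff_res w u v + e u / deg w u - e v / deg w v) (eff_res w u v)"
    using approx_factor_eff_res_perturbed \<open>u \<noteq> v\<close> eps by simp
  moreover have "eff_res w u v + e u / deg w u - e v / deg w v
      = (\<sigma>t u $ u) / deg w u - (\<sigma>t u $ v) / deg w v + (\<sigma>t v $ v) / deg w v - (\<sigma>t v $ u) / deg w u"
    by (simp add: eff_res_eq_sigma e_def diff_divide_distrib)
  ultimately show ?thesis by simp
qed

end
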